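(* For $x\in(0,1)$ let $x'=\sqrt{1-x^2}$ and $f(x)=x^2x'^2\,\mathcal{K}(x)\mathcal{K}(x')$. Then $f$ is increasing on $(0,1/\sqrt2]$ and decreasing on $[1/\sqrt2,1)$, and $$\max_{0<x<1}f(x)=f(\sqrt{1/2})=\tfrac14\big(\mathcal{K}(\sqrt{1/2})\big)^2=0.859398\ldots.$$
   Context: $\mathcal{K}(x)=\frac{\pi}{2}F(\tfrac12,\tfrac12;1;x^2)$ for $x\in(0,1)$ is the complete elliptic integral of the first kind, where $F(a,b;c;x)=\sum_{n\ge0}\frac{(a,n)(b,n)}{(c,n)n!}x^n$ and $(a,n)=a(a+1)\cdots(a+n-1)$, $(a,0)=1$. *)

theory Defs
  imports "HOL-Analysis.Analysis"
begin

definition hypergeomF :: "real \<Rightarrow> real \<Rightarrow> real \<Rightarrow> real \<Rightarrow> real" where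
  "hypergeomF a b c x =
     (\<Sum>n. pochhammer a n * pochhammer b n / (pochhammer c n * fact n) * x ^ n)"

definition ellK :: "real \<Rightarrow> real" where
  "ellK x = pi / 2 * hypergeomF (1/2) (1/2) 1 (x^2)"

definition compl :: "real \<Rightarrow> real" where
  "compl x = sqrt (1 - x^2)"

definition fK :: "real \<Rightarrow> real" where
  "fK x = x^2 * (compl x)^2 * ellK x * ellK (compl x)"

end

theory Submission
  imports Defs
begin

text \<open>Put \<open>t = x\<^sup>2\<close> and \<open>F = F(1/2,1/2;1;\<cdot>)\<close>. Then \<open>f(x) = (\<pi>/2)\<^sup>2 g(t)\<close> with
  \<open>g(t) = t(1-t) F(t) F(1-t)\<close>, which is symmetric about \<open>t = 1/2\<close>. Writing \<open>W = t(1-t)F'\<close>, the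
  hypergeometric equation reads \<open>W' = F/4\<close>, so \<open>Q = W/F - t\<close> has \<open>Q' = 1/4 - W F'/F\<^sup>2 - 1 < 0\<close>.
  Since \<open>t(1-t) g'(t)/g(t) = Q(t) - Q(1-t)\<close>, \<open>g\<close> increases on \<open>(0,1/2]\<close> and, by symmetry, decreases
  on \<open>[1/2,1)\<close>. The maximal value \<open>\<pi>\<^sup>2 F(1/2)\<^sup>2/16\<close> is enclosed by summing 20 terms of the series
  and bounding the tail by a geometric series.\<close>

lemma summable_power_series_bounded_coeffs:
  fixes a :: "nat \<Rightarrow> 'a::{real_normed_div_algebra,banach}"
  assumes "\<And>n. norm (a n) \<le> B" "norm x < 1"
  shows "summable (\<lambda>n. a n * x ^ n)"
proof (rule summable_comparison_test')
  show "summable (\<lambda>n. B * norm x ^ n)"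
    using assms(2) by (intro summable_mult summable_geometric) auto
  show "norm (a n * x ^ n) \<le> B * norm x ^ n" for n
    using assms(1)[of n] by (simp add: norm_mult norm_power mult_right_mono)
qed

lemma suminf_power_series_le_partial_sum_plus_tail:
  fixes c :: "nat \<Rightarrow> real"
  assumes "decseq c" "\<And>n. 0 \<le> c n" "0 \<le> x" "x < 1"
  shows "(\<Sum>n. c n * x ^ n) \<le> (\<Sum>n<N. c n * x ^ n) + c N * x ^ N / (1 - x)"
proof -
  have "norm (c n) \<le> c 0" for n
    using assms(1,2) by (simp add: decseqD)
  then have sm: "summable (\<lambda>n. c n * x ^ n)"
    using assms(3,4) by (intro summable_power_series_bounded_coeffs) auto
  have "norm x < 1"
    using assms(3,4) by simp
  from sums_mult[OF geometric_sums[OF this], of "c N * x ^ N"]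
  have geo: "(\<lambda>n. c N * x ^ N * x ^ n) sums (c N * x ^ N / (1 - x))"
    by simp
  have "(\<Sum>n. c (n + N) * x ^ (n + N)) \<le> c N * x ^ N / (1 - x)"
  proof (rule sums_le[OF _ summable_sums geo])
    show "summable (\<lambda>n. c (n + N) * x ^ (n + N))"
      using summable_ignore_initial_segment[OF sm, of N] by simp
    show "c (n + N) * x ^ (n + N) \<le> c N * x ^ N * x ^ n" for n
      using mult_right_mono[OF decseqD[OF assms(1), of N "n + N"], of "x ^ N * x ^ n"] assms(3)
      by (simp add: power_add mult_ac)
  qed
  then show ?thesis
    using suminf_split_initial_segment[OF sm, of N] by linarith
qed

definition K_coeff :: "nat \<Rightarrow> real" where
  "K_coeff n = (pochhammer (1/2) n / fact n)\<^sup>2"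

definition K_series :: "real \<Rightarrow> real" where
  "K_series x = (\<Sum>n. K_coeff n * x ^ n)"

lemma hypergeomF_half_half_one: "hypergeomF (1/2) (1/2) 1 x = K_series x"
  unfolding hypergeomF_def K_series_def K_coeff_def
  by (simp add: pochhammer_fact[symmetric] power2_eq_square)

lemma K_coeff_0 [simp]: "K_coeff 0 = 1"
  by (simp add: K_coeff_def)

lemma K_coeff_Suc: "K_coeff (Suc n) = K_coeff n * ((2 * real n + 1) / (2 * real n + 2))\<^sup>2"
  unfolding K_coeff_def pochhammer_Suc fact_Suc
  by (simp add: field_simps power2_eq_square)

lemma K_coeff_nonneg: "0 \<le> K_coeff n"
  by (simp add: K_coeff_def)

lemma decseq_K_coeff: "decseq K_coeff"
proof (rule decseq_SucI)
  fix n
  have "((2 * real n + 1) / (2 * real n + 2))\<^sup>2 \<le> 1"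
    by (rule power_le_one) (auto simp: field_simps)
  then show "K_coeff (Suc n) \<le> K_coeff n"
    unfolding K_coeff_Suc using K_coeff_nonneg[of n] by (simp add: mult_left_le)
qed

lemma K_coeff_le_one: "K_coeff n \<le> 1"
  using decseqD[OF decseq_K_coeff, of 0 n] by simp

lemma summable_K_series: "\<bar>x\<bar> < 1 \<Longrightarrow> summable (\<lambda>n. K_coeff n * x ^ n)"
  by (rule summable_power_series_bounded_coeffs[where B = 1])
     (auto simp: K_coeff_nonneg K_coeff_le_one)

lemma K_series_ge_one: "0 \<le> x \<Longrightarrow> x < 1 \<Longrightarrow> 1 \<le> K_series x"
  using sum_le_suminf[OF summable_K_series, of x "{0}"]
  by (simp add: K_series_def K_coeff_nonneg)

lemma K_series_half_bounds: "1.18034057 \<le> K_series (1/2) \<and> K_series (1/2) \<le> 1.1803406004"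
proof -
  have "(\<Sum>n<20. K_coeff n * (1/2) ^ n) \<le> K_series (1/2)"
    unfolding K_series_def
    by (rule sum_le_suminf[OF summable_K_series]) (auto simp: K_coeff_nonneg)
  moreover have "K_series (1/2) \<le> (\<Sum>n<20. K_coeff n * (1/2) ^ n) + K_coeff 20 * (1/2) ^ 20 / (1 - 1/2)"
    unfolding K_series_def
    by (rule suminf_power_series_le_partial_sum_plus_tail) (auto simp: decseq_K_coeff K_coeff_nonneg)
  moreover have "1.18034057 \<le> (\<Sum>n<20. K_coeff n * (1/2::real) ^ n)"
    and "(\<Sum>n<20. K_coeff n * (1/2::real) ^ n) + K_coeff 20 * (1/2) ^ 20 / (1 - 1/2) \<le> 1.1803406004"
    by (simp_all add: eval_nat_numeral K_coeff_Suc)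
  ultimately show ?thesis by linarith
qed

definition K_series_deriv :: "real \<Rightarrow> real" where
  "K_series_deriv x = (\<Sum>n. diffs K_coeff n * x ^ n)"

lemma K_series_has_derivative: "\<bar>x\<bar> < 1 \<Longrightarrow> (K_series has_real_derivative K_series_deriv x) (at x)"
  unfolding K_series_def[abs_def] K_series_deriv_def
  by (rule termdiffs_strong'[where K = 1]) (auto intro: summable_K_series)

lemma K_series_deriv_nonneg: "0 \<le> x \<Longrightarrow> x < 1 \<Longrightarrow> 0 \<le> K_series_deriv x"
  unfolding K_series_deriv_def
  by (rule suminf_nonneg, rule termdiff_converges[where K = 1])
     (auto simp: diffs_def summable_K_series K_coeff_nonneg)

definition K_antideriv_coeff :: "nat \<Rightarrow> real" where
  "K_antideriv_coeff n = (if n = 0 then 0 else K_coeff (n - 1) / (4 * real n))"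

definition K_antideriv :: "real \<Rightarrow> real" where
  "K_antideriv x = (\<Sum>n. K_antideriv_coeff n * x ^ n)"

lemma K_antideriv_coeff_bounds: "0 \<le> K_antideriv_coeff n \<and> K_antideriv_coeff n \<le> 1"
proof (cases n)
  case (Suc m)
  have "K_coeff m \<le> 4 * (real m + 1)"
    using K_coeff_le_one[of m] by simp
  then show ?thesis
    using Suc K_coeff_nonneg[of m] by (simp add: K_antideriv_coeff_def divide_le_eq)
qed (simp add: K_antideriv_coeff_def)

lemma diffs_K_antideriv_coeff: "diffs K_antideriv_coeff n = K_coeff n / 4"
  by (simp add: diffs_def K_antideriv_coeff_def field_simps)

lemma summable_K_antideriv: "\<bar>x\<bar> < 1 \<Longrightarrow> summable (\<lambda>n. K_antideriv_coeff n * x ^ n)"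
  by (rule summable_power_series_bounded_coeffs[where B = 1])
     (use K_antideriv_coeff_bounds in auto)

lemma K_antideriv_nonneg: "0 \<le> x \<Longrightarrow> x < 1 \<Longrightarrow> 0 \<le> K_antideriv x"
  unfolding K_antideriv_def
  by (rule suminf_nonneg[OF summable_K_antideriv]) (use K_antideriv_coeff_bounds in auto)

lemma K_antideriv_has_derivative:
  assumes "\<bar>x\<bar> < 1"
  shows "(K_antideriv has_real_derivative K_series x / 4) (at x)"
proof -
  have "(K_antideriv has_real_derivative (\<Sum>n. diffs K_antideriv_coeff n * x ^ n)) (at x)"
    unfolding K_antideriv_def[abs_def]
    by (rule termdiffs_strong'[where K = 1]) (use assms summable_K_antideriv in auto)
  also have "(\<Sum>n. diffs K_antideriv_coeff n * x ^ n) = K_series x / 4"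
    using suminf_divide[OF summable_K_series[OF assms], of 4]
    by (simp add: diffs_K_antideriv_coeff K_series_def)
  finally show ?thesis .
qed

text \<open>Coefficientwise form of the hypergeometric equation \<open>(t(1-t)F')' = F/4\<close>.\<close>

lemma K_antideriv_coeff_Suc:
  "K_antideriv_coeff (Suc n) = diffs K_coeff n - real n * K_coeff n"
proof -
  define q where "q = (2 * real n + 1) / (2 * real n + 2)"
  have "0 \<le> real n" by simp
  then have q: "1 / (4 * (real n + 1)) = (real n + 1) * q\<^sup>2 - real n"
    unfolding q_def by (simp add: field_simps) (simp add: power2_eq_square algebra_simps)
  have "K_antideriv_coeff (Suc n) = K_coeff n * (1 / (4 * (real n + 1)))"
    by (simp add: K_antideriv_coeff_def)
  also have "\<dots> = (real n + 1) * (K_coeff n * q\<^sup>2) - real n * K_coeff n"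
    unfolding q by (simp add: algebra_simps)
  also have "\<dots> = diffs K_coeff n - real n * K_coeff n"
    by (simp add: diffs_def K_coeff_Suc q_def)
  finally show ?thesis .
qed

lemma K_antideriv_eq:
  assumes "\<bar>x\<bar> < 1"
  shows "K_antideriv x = x * (1 - x) * K_series_deriv x"
proof -
  have s1: "(\<lambda>n. diffs K_coeff n * x ^ n) sums K_series_deriv x"
    unfolding K_series_deriv_def
    by (rule summable_sums, rule termdiff_converges[where K = 1])
       (use assms summable_K_series in auto)
  have "(\<lambda>n. (\<lambda>n. real n * K_coeff n * x ^ n) (Suc n)) sums (x * K_series_deriv x)"
    using sums_mult[OF s1, of x] by (simp add: diffs_def algebra_simps)
  then have s2: "(\<lambda>n. real n * K_coeff n * x ^ n) sums (x * K_series_deriv x)"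
    by (subst (asm) sums_Suc_iff) simp
  have "(\<lambda>n. x * (diffs K_coeff n * x ^ n) - x * (real n * K_coeff n * x ^ n))
          sums (x * K_series_deriv x - x * (x * K_series_deriv x))"
    by (intro sums_diff sums_mult s1 s2)
  then have "(\<lambda>n. (\<lambda>n. K_antideriv_coeff n * x ^ n) (Suc n)) sums (x * (1 - x) * K_series_deriv x)"
    by (simp add: K_antideriv_coeff_Suc algebra_simps)
  then have "(\<lambda>n. K_antideriv_coeff n * x ^ n) sums (x * (1 - x) * K_series_deriv x)"
    by (subst (asm) sums_Suc_iff) (simp add: K_antideriv_coeff_def)
  then show ?thesis
    unfolding K_antideriv_def by (rule sums_unique[symmetric])
qed

text \<open>By \<open>K_antideriv_eq\<close> this is \<open>t(1-t)F'(t)/F(t) - t\<close>, the function \<open>Q\<close> of the proof idea.\<close>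

definition K_shifted_log_deriv :: "real \<Rightarrow> real" where
  "K_shifted_log_deriv t = K_antideriv t / K_series t - t"

lemma K_shifted_log_deriv_strict_decreasing:
  assumes "0 \<le> a" "a < b" "b < 1"
  shows "K_shifted_log_deriv b < K_shifted_log_deriv a"
proof (rule DERIV_neg_imp_decreasing[OF assms(2)])
  fix x assume "a \<le> x" "x \<le> b"
  then have x: "0 \<le> x" "x < 1" "\<bar>x\<bar> < 1" using assms by auto
  define F W dF where "F = K_series x" and "W = K_antideriv x" and "dF = K_series_deriv x"
  have F1: "1 \<le> F" using K_series_ge_one x by (simp add: F_def)
  have WdF: "0 \<le> W * dF" using K_antideriv_nonneg K_series_deriv_nonneg x by (simp add: W_def dF_def)
  have "(K_shifted_log_deriv has_real_derivative (F / 4 * F - W * dF) / (F * F) - 1) (at x)"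
    unfolding K_shifted_log_deriv_def[abs_def] F_def W_def dF_def using F1 F_def
    by (auto intro!: derivative_eq_intros K_antideriv_has_derivative K_series_has_derivative x)
  moreover have "(F / 4 * F - W * dF) / (F * F) - 1 < 0"
  proof -
    have "0 < F * F" using F1 by simp
    moreover have "F / 4 * F - W * dF < F * F" using calculation WdF by linarith
    ultimately show ?thesis by (simp add: divide_less_eq)
  qed
  ultimately show "\<exists>y. (K_shifted_log_deriv has_real_derivative y) (at x) \<and> y < 0" by blast
qed

definition K_prod :: "real \<Rightarrow> real" where
  "K_prod t = t * (1 - t) * K_series t * K_series (1 - t)"

lemma K_prod_sym: "K_prod (1 - t) = K_prod t"
  unfolding K_prod_def by (simp add: algebra_simps)

lemma K_prod_has_derivative:
  assumes "0 < t" "t < 1"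
  shows "(K_prod has_real_derivative
           K_series t * K_series (1 - t) * (K_shifted_log_deriv t - K_shifted_log_deriv (1 - t))) (at t)"
proof -
  have t: "\<bar>t\<bar> < 1" "\<bar>1 - t\<bar> < 1" using assms by auto
  have F1: "1 \<le> K_series t" "1 \<le> K_series (1 - t)" using K_series_ge_one assms by auto
  have d1: "((\<lambda>t. K_series (1 - t)) has_real_derivative K_series_deriv (1 - t) * (- 1)) (at t)"
    by (rule DERIV_chain2[where g = "\<lambda>t. 1 - t", OF K_series_has_derivative[OF t(2)]])
       (auto intro!: derivative_eq_intros)
  have "(K_prod has_real_derivative
          (1 - 2 * t) * K_series t * K_series (1 - t) + t * (1 - t) * K_series_deriv t * K_series (1 - t)
          - K_series t * ((1 - t) * t * K_series_deriv (1 - t))) (at t)"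
    unfolding K_prod_def[abs_def]
    by (rule derivative_eq_intros K_series_has_derivative[OF t(1)] d1 refl | simp)+
       (simp add: algebra_simps)
  moreover have "(1 - 2 * t) * K_series t * K_series (1 - t) + t * (1 - t) * K_series_deriv t * K_series (1 - t)
          - K_series t * ((1 - t) * t * K_series_deriv (1 - t))
        = K_series t * K_series (1 - t) * (K_shifted_log_deriv t - K_shifted_log_deriv (1 - t))"
    unfolding K_shifted_log_deriv_def K_antideriv_eq[OF t(1)] K_antideriv_eq[OF t(2)] using F1
    by (simp add: field_simps)
  ultimately show ?thesis by simp
qed

lemma K_prod_strict_increasing:
  assumes "0 < s" "s < u" "u \<le> 1/2"
  shows "K_prod s < K_prod u"
proof (rule DERIV_pos_imp_increasing_open[OF assms(2)])
  fix x assume x: "s < x" "x < u"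
  have F1: "1 \<le> K_series x" "1 \<le> K_series (1 - x)" using K_series_ge_one x assms by auto
  have "K_shifted_log_deriv (1 - x) < K_shifted_log_deriv x"
    by (rule K_shifted_log_deriv_strict_decreasing) (use x assms in auto)
  then have "0 < K_series x * K_series (1 - x) * (K_shifted_log_deriv x - K_shifted_log_deriv (1 - x))"
    using F1 by simp
  then show "\<exists>y. (K_prod has_real_derivative y) (at x) \<and> 0 < y"
    using K_prod_has_derivative[of x] x assms by auto
next
  have "isCont K_prod x" if "x \<in> {s..u}" for x
    using K_prod_has_derivative[THEN DERIV_isCont, of x] that assms by auto
  then show "continuous_on {s..u} K_prod"
    using continuous_at_imp_continuous_on by blast
qed

lemma K_prod_strict_decreasing:
  assumes "1/2 \<le> s" "s < u" "u < 1"
  shows "K_prod u < K_prod s"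
  using K_prod_strict_increasing[of "1 - u" "1 - s"] assms K_prod_sym[of u] K_prod_sym[of s] by simp

lemma fK_eq_K_prod:
  assumes "0 < x" "x < 1"
  shows "fK x = (pi / 2)\<^sup>2 * K_prod (x\<^sup>2)"
proof -
  have compl_sq: "(compl x)\<^sup>2 = 1 - x\<^sup>2"
    unfolding compl_def using assms by (simp add: abs_square_le_1)
  show ?thesis
    unfolding fK_def ellK_def hypergeomF_half_half_one K_prod_def compl_sq
    by (simp add: algebra_simps power2_eq_square)
qed

lemma inv_sqrt2_bounds: "0 < 1 / sqrt 2" "1 / sqrt 2 < (1::real)"
  by (simp_all add: divide_less_eq)

lemma fK_strict_mono_on: "strict_mono_on {0<..1 / sqrt 2} fK"
proof (rule strict_mono_onI)
  fix x y assume x: "x \<in> {0<..1 / sqrt 2}" and y: "y \<in> {0<..1 / sqrt 2}" and "x < y"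
  have "x < 1" "y < 1"
    using x y inv_sqrt2_bounds(2) unfolding greaterThanAtMost_iff by linarith+
  have "y\<^sup>2 \<le> (1 / sqrt 2)\<^sup>2"
    using y by (auto intro: power_mono)
  moreover have "x\<^sup>2 < y\<^sup>2"
    using x \<open>x < y\<close> by (auto intro: power_strict_mono)
  ultimately have "K_prod (x\<^sup>2) < K_prod (y\<^sup>2)"
    using x by (intro K_prod_strict_increasing) (auto simp: power_divide)
  then show "fK x < fK y"
    using fK_eq_K_prod[of x] fK_eq_K_prod[of y] x y \<open>x < 1\<close> \<open>y < 1\<close> by simp
qed

lemma fK_strict_antimono_on:
  assumes "1 / sqrt 2 \<le> x" "x < y" "y < 1"
  shows "fK y < fK x"
proof -
  have "0 < x" using assms(1) inv_sqrt2_bounds by linarith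
  then have "(1 / sqrt 2)\<^sup>2 \<le> x\<^sup>2" "x\<^sup>2 < y\<^sup>2" "y\<^sup>2 < 1"
    using assms by (auto intro: power_mono power_strict_mono simp: power_less_one_iff)
  then have "K_prod (y\<^sup>2) < K_prod (x\<^sup>2)"
    by (intro K_prod_strict_decreasing) (auto simp: power_divide)
  then show ?thesis
    using fK_eq_K_prod[of x] fK_eq_K_prod[of y] assms \<open>0 < x\<close> by simp
qed

lemma fK_sqrt_half:
  "fK (sqrt (1/2)) = (1/4) * (ellK (sqrt (1/2)))\<^sup>2"
  "fK (sqrt (1/2)) = pi\<^sup>2 / 16 * (K_series (1/2))\<^sup>2"
proof -
  have "compl (sqrt (1/2)) = sqrt (1/2)"
    unfolding compl_def by (simp add: power_divide)
  then show "fK (sqrt (1/2)) = (1/4) * (ellK (sqrt (1/2)))\<^sup>2"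
    unfolding fK_def by (simp add: power2_eq_square)
  show "fK (sqrt (1/2)) = pi\<^sup>2 / 16 * (K_series (1/2))\<^sup>2"
    using fK_eq_K_prod[of "sqrt (1/2)"] by (simp add: K_prod_def power2_eq_square)
qed

lemma fK_sqrt_half_bounds: "0.859398 \<le> fK (sqrt (1/2)) \<and> fK (sqrt (1/2)) < 0.859399"
proof -
  have pi: "3.141592653588 \<le> pi" "pi \<le> 3.1415926535899" by (rule pi_approx)+
  have F: "1.18034057 \<le> K_series (1/2)" "K_series (1/2) \<le> 1.1803406004"
    using K_series_half_bounds by auto
  have "(3.141592653588::real)\<^sup>2 * 1.18034057\<^sup>2 \<le> pi\<^sup>2 * (K_series (1/2))\<^sup>2"
    using pi F by (intro mult_mono power_mono) auto
  moreover have "pi\<^sup>2 * (K_series (1/2))\<^sup>2 \<le> (3.1415926535899::real)\<^sup>2 * 1.1803406004\<^sup>2"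
    using pi F by (intro mult_mono power_mono) auto
  ultimately show ?thesis
    unfolding fK_sqrt_half(2) by (simp add: power2_eq_square)
qed

theorem corollary3p4:
  shows "strict_mono_on {0<..1 / sqrt 2} fK
    \<and> (\<forall>x\<in>{1 / sqrt 2..<1}. \<forall>y\<in>{1 / sqrt 2..<1}. x < y \<longrightarrow> fK y < fK x)
    \<and> (\<forall>x\<in>{0<..<1}. fK x \<le> fK (sqrt (1/2)))
    \<and> fK (sqrt (1/2)) = (1/4) * (ellK (sqrt (1/2)))^2
    \<and> 0.859398 \<le> fK (sqrt (1/2)) \<and> fK (sqrt (1/2)) < 0.859399"
proof (intro conjI ballI impI)
  have sqrt_half: "sqrt (1/2) = 1 / sqrt (2::real)"
    by (simp add: real_sqrt_divide)
  show "strict_mono_on {0<..1 / sqrt 2} fK"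
    by (rule fK_strict_mono_on)
  show "fK y < fK x" if "x \<in> {1 / sqrt 2..<1}" "y \<in> {1 / sqrt 2..<1}" "x < y" for x y
    using fK_strict_antimono_on that by auto
  show "fK x \<le> fK (sqrt (1/2))" if "x \<in> {0<..<1}" for x
  proof (cases "x \<le> 1 / sqrt 2")
    case True
    then show ?thesis
      using strict_mono_on_leD[OF fK_strict_mono_on] that sqrt_half inv_sqrt2_bounds by auto
  next
    case False
    then show ?thesis
      using fK_strict_antimono_on[of "1 / sqrt 2" x] that sqrt_half inv_sqrt2_bounds by auto
  qed
qed (use fK_sqrt_half fK_sqrt_half_bounds in auto)

end
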